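(* Let $\mathcal{F}$ be a non-trivial minor-closed class of multigraphs and let $d_{\mathcal{F}}$ be a number such that every multigraph $H\in\mathcal{F}$ satisfies $|E(H)|\le \mu(H)\cdot d_{\mathcal{F}}\cdot |V(H)|$. Let $m$ be a positive integer and $G$ a multigraph with $\mu(G)\le m$ and $\delta(G)\ge 3m\cdot d_{\mathcal{F}}$. Then for every $X\subseteq V(G)$ with $G-X\in\mathcal{F}$, \[|E(G)|\;\le\;2\sum_{v\in X}\mathrm{edeg}_G(v)\;\le\;4|E(G)|.\]
   Context: Graphs are finite multigraphs without loops, edges counted with multiplicity. $\mu(H)$ is the maximum multiplicity of an edge of $H$. $\mathrm{edeg}_G(v)$ is the edge-degree of $v$, i.e., the number of edges of $G$ incident to $v$; $\delta(G)$ is the minimum edge-degree of $G$. A class is minor-closed if it is closed under taking minors, and non-trivial if it neither contains all graphs nor is empty. *)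

theory Defs
  imports Complex_Main "HOL-Library.Multiset"
begin

text \<open>A multigraph on vertex type 'v: a vertex set together with a multiset of
edges; each edge is a 2-element set of vertices (no loops), multiplicities
are counted by the multiset.\<close>

type_synonym 'v mgraph = "'v set \<times> 'v set multiset"

definition verts :: "'v mgraph \<Rightarrow> 'v set" where "verts G = fst G"
definition edges :: "'v mgraph \<Rightarrow> 'v set multiset" where "edges G = snd G"

definition mgraph :: "'v mgraph \<Rightarrow> bool" where
  "mgraph G \<longleftrightarrow> finite (verts G) \<and> (\<forall>e \<in># edges G. card e = 2 \<and> e \<subseteq> verts G)"

definition mu :: "'v mgraph \<Rightarrow> nat" where
  "mu G = Max (insert 0 ((\<lambda>e. count (edges G) e) ` set_mset (edges G)))"

definition edeg :: "'v mgraph \<Rightarrow> 'v \<Rightarrow> nat" where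
  "edeg G v = size (filter_mset (\<lambda>e. v \<in> e) (edges G))"

definition delete_vertices :: "'v mgraph \<Rightarrow> 'v set \<Rightarrow> 'v mgraph" where
  "delete_vertices G X = (verts G - X, filter_mset (\<lambda>e. e \<inter> X = {}) (edges G))"

definition delete_edge :: "'v mgraph \<Rightarrow> 'v set \<Rightarrow> 'v mgraph" where
  "delete_edge G e = (verts G, edges G - {#e#})"

text \<open>contraction of an edge {u,w}: w is merged into u; resulting loops are
discarded, parallel edges are kept with multiplicity\<close>
definition contract :: "'v mgraph \<Rightarrow> 'v \<Rightarrow> 'v \<Rightarrow> 'v mgraph" where
  "contract G u w = (verts G - {w},
     filter_mset (\<lambda>e. card e = 2)
       (image_mset (\<lambda>e. (\<lambda>x. if x = w then u else x) ` e) (edges G)))"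

definition relabel :: "('v \<Rightarrow> 'v) \<Rightarrow> 'v mgraph \<Rightarrow> 'v mgraph" where
  "relabel f G = (f ` verts G, image_mset (\<lambda>e. f ` e) (edges G))"

definition minor_closed :: "'v mgraph set \<Rightarrow> bool" where
  "minor_closed F \<longleftrightarrow> F \<subseteq> Collect mgraph
    \<and> (\<forall>G\<in>F. \<forall>f. inj_on f (verts G) \<longrightarrow> relabel f G \<in> F)
    \<and> (\<forall>G\<in>F. \<forall>v\<in>verts G. delete_vertices G {v} \<in> F)
    \<and> (\<forall>G\<in>F. \<forall>e\<in>#edges G. delete_edge G e \<in> F)
    \<and> (\<forall>G\<in>F. \<forall>u w. {u, w} \<in># edges G \<longrightarrow> contract G u w \<in> F)"

definition nontrivial_class :: "'v mgraph set \<Rightarrow> bool" where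
  "nontrivial_class F \<longleftrightarrow> F \<noteq> {} \<and> F \<noteq> Collect mgraph"

end

theory Submission
  imports Defs
begin

text \<open>Split the edges of G by the number a(e) of endpoints in X; let Y be the rest of the
vertices and E0 the edges inside Y, i.e. the edges of G - X. Since G - X lies in F and has
multiplicity at most m, E0 is at most m dF |Y|, whereas the degree sum over Y is at least
3 m dF |Y|. So 3 E0 is at most the degree sum over Y, which counts every edge e with weight
2 - a(e). Comparing the two counts edge by edge via 1 + (2 - a) \<le> 2a + 3[a = 0] gives
|E(G)| \<le> 2 sum_X edeg = 2 sum_e a(e); the upper bound is just a(e) \<le> 2.\<close>

lemma verts_delete_vertices [simp]: "verts (delete_vertices G X) = verts G - X"
  by (simp add: delete_vertices_def verts_def)

lemma edges_delete_vertices [simp]: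
  "edges (delete_vertices G X) = filter_mset (\<lambda>e. e \<inter> X = {}) (edges G)"
  by (simp add: delete_vertices_def edges_def)

lemma mu_mono:
  assumes "edges H \<subseteq># edges G"
  shows "mu H \<le> mu G"
  unfolding mu_def
proof (intro Max.boundedI)
  fix k assume "k \<in> insert 0 ((\<lambda>e. count (edges H) e) ` set_mset (edges H))"
  then consider "k = 0" | e where "e \<in># edges H" "k = count (edges H) e"
    by auto
  then show "k \<le> Max (insert 0 ((\<lambda>e. count (edges G) e) ` set_mset (edges G)))"
  proof cases
    case 2
    then have "e \<in># edges G" "k \<le> count (edges G) e"
      using assms by (auto intro: mset_subset_eqD simp: mset_subset_eq_count)
    moreover have "count (edges G) e \<le> Max (insert 0 ((\<lambda>e. count (edges G) e) ` set_mset (edges G)))"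
      using \<open>e \<in># edges G\<close> by (intro Max_ge) auto
    ultimately show ?thesis
      by linarith
  qed simp
qed simp_all

lemma mu_delete_vertices_le: "mu (delete_vertices G X) \<le> mu G"
  by (intro mu_mono) simp

lemma sum_edeg_eq_sum_card_Int:
  assumes "finite A"
  shows "(\<Sum>v\<in>A. edeg G v) = (\<Sum>e\<in>#edges G. card (e \<inter> A))"
proof -
  have "(\<Sum>v\<in>A. size (filter_mset (\<lambda>e. v \<in> e) M)) = (\<Sum>e\<in>#M. card (e \<inter> A))"
    for M :: "'a set multiset"
  proof (induction M)
    case (add e M)
    have "(\<Sum>v\<in>A. size (filter_mset (\<lambda>e'. v \<in> e') (add_mset e M)))
        = (\<Sum>v\<in>A. size (filter_mset (\<lambda>e'. v \<in> e') M)) + (\<Sum>v\<in>A. if v \<in> e then 1 else 0)"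
      by (subst sum.distrib[symmetric]) (intro sum.cong; simp)
    also have "(\<Sum>v\<in>A. if v \<in> e then 1 else 0) = card (e \<inter> A)"
      using assms by (simp add: sum.If_cases Int_commute)
    finally show ?case
      using add by simp
  qed simp
  then show ?thesis
    by (simp add: edeg_def)
qed

lemma one_add_card_Diff_le:
  assumes "card e = 2"
  shows "1 + card (e - X) \<le> 2 * card (e \<inter> X) + (if e \<inter> X = {} then 3 else 0)"
proof -
  have "finite e"
    using assms card.infinite by fastforce
  then have "card (e \<inter> X) + card (e - X) = 2" and "e \<inter> X = {} \<longleftrightarrow> card (e \<inter> X) = 0"
    using assms card_Int_Diff[of e X] by auto
  then show ?thesis
    by auto
qed

lemma size_add_sum_card_Diff_le:
  assumes "\<forall>e\<in>#E. card e = 2"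
  shows "size E + (\<Sum>e\<in>#E. card (e - X))
    \<le> 2 * (\<Sum>e\<in>#E. card (e \<inter> X)) + 3 * size (filter_mset (\<lambda>e. e \<inter> X = {}) E)"
  using assms
proof (induction E)
  case (add e E)
  then show ?case
    using one_add_card_Diff_le[of e X] by (cases "e \<inter> X = {}") simp_all
qed simp

lemma size_le_twice_sum_card_Int:
  assumes "\<forall>e\<in>#E. card e = 2"
    and "3 * size (filter_mset (\<lambda>e. e \<inter> X = {}) E) \<le> (\<Sum>e\<in>#E. card (e - X))"
  shows "size E \<le> 2 * (\<Sum>e\<in>#E. card (e \<inter> X))"
  using size_add_sum_card_Diff_le[OF assms(1), of X] assms(2) by linarith

lemma sum_card_Int_le_twice_size:
  assumes "\<forall>e\<in>#E. card e = 2"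
  shows "(\<Sum>e\<in>#E. card (e \<inter> X)) \<le> 2 * size E"
proof -
  have "card (e \<inter> X) \<le> 2" if "e \<in># E" for e
  proof -
    have "card e = 2"
      using assms that by blast
    then show ?thesis
      using card_mono[OF card_ge_0_finite Int_lower1, of e X] by simp
  qed
  then have "(\<Sum>e\<in>#E. card (e \<inter> X)) \<le> (\<Sum>e\<in>#E. 2)"
    by (intro sum_mset_mono)
  then show ?thesis
    by simp
qed

text \<open>For negative d the hypothesis forces H to be edgeless, so no sign condition is needed.\<close>
lemma three_size_edges_le_sum:
  fixes d :: real and f :: "'v \<Rightarrow> nat"
  assumes sparse: "real (size (edges H)) \<le> real (mu H) * d * real (card (verts H))"
    and "mu H \<le> m"
    and "\<forall>v\<in>verts H. 3 * real m * d \<le> real (f v)"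
  shows "3 * size (edges H) \<le> (\<Sum>v\<in>verts H. f v)"
proof (cases "d \<ge> 0")
  case True
  have "real (mu H) * d * real (card (verts H)) \<le> real m * d * real (card (verts H))"
    using \<open>mu H \<le> m\<close> True by (intro mult_right_mono) auto
  then have "3 * real (size (edges H)) \<le> real (card (verts H)) * (3 * real m * d)"
    using sparse by (simp add: algebra_simps)
  also have "\<dots> \<le> (\<Sum>v\<in>verts H. real (f v))"
    using assms(3) by (intro sum_bounded_below) simp
  finally show ?thesis
    by (simp flip: of_nat_sum)
next
  case False
  then have "real (mu H) * d * real (card (verts H)) \<le> 0"
    by (simp add: mult_nonpos_nonneg mult_nonneg_nonpos)
  then show ?thesis
    using sparse by simp
qed

theorem lemma7:
  fixes F :: "'v mgraph set" and dF :: real and m :: nat and G :: "'v mgraph" and X :: "'v set"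
  assumes "minor_closed F" and "nontrivial_class F"
    and "\<forall>H\<in>F. real (size (edges H)) \<le> real (mu H) * dF * real (card (verts H))"
    and "m > 0"
    and "mgraph G"
    and "mu G \<le> m"
    and "\<forall>v\<in>verts G. real (edeg G v) \<ge> 3 * real m * dF"
    and "X \<subseteq> verts G"
    and "delete_vertices G X \<in> F"
  shows "size (edges G) \<le> 2 * (\<Sum>v\<in>X. edeg G v)
       \<and> 2 * (\<Sum>v\<in>X. edeg G v) \<le> 4 * size (edges G)"
proof -
  have fin: "finite (verts G)" "finite X"
    and edge: "\<forall>e\<in>#edges G. card e = 2 \<and> e \<subseteq> verts G"
    using \<open>mgraph G\<close> \<open>X \<subseteq> verts G\<close> finite_subset by (auto simp: mgraph_def)
  have "3 * size (edges (delete_vertices G X)) \<le> (\<Sum>v\<in>verts (delete_vertices G X). edeg G v)"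
    using assms(3,7,9) mu_delete_vertices_le[of G X] \<open>mu G \<le> m\<close>
    by (intro three_size_edges_le_sum[where d = dF and m = m]) auto
  also have "\<dots> = (\<Sum>e\<in>#edges G. card (e \<inter> (verts G - X)))"
    using fin by (simp add: sum_edeg_eq_sum_card_Int)
  also have "\<dots> = (\<Sum>e\<in>#edges G. card (e - X))"
  proof (intro arg_cong[where f = sum_mset] image_mset_cong)
    fix e assume "e \<in># edges G"
    then have "e \<inter> (verts G - X) = e - X"
      using edge by blast
    then show "card (e \<inter> (verts G - X)) = card (e - X)"
      by simp
  qed
  finally have "size (edges G) \<le> 2 * (\<Sum>e\<in>#edges G. card (e \<inter> X))"
    using edge by (intro size_le_twice_sum_card_Int) auto
  moreover have "(\<Sum>e\<in>#edges G. card (e \<inter> X)) \<le> 2 * size (edges G)"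
    using edge by (intro sum_card_Int_le_twice_size) auto
  ultimately show ?thesis
    using sum_edeg_eq_sum_card_Int[OF fin(2), of G] by simp
qed

end
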